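(* Let $f:[0,+\infty)\to\mathbb{C}$ be a continuous function, not identically zero, such that $\lim_{x\to+\infty}f(x)=0$. Then for every $n\ge1$ and every choice of pairwise distinct numbers $\lambda_1,\dots,\lambda_n>0$, the functions $x\mapsto f(x/\lambda_1),\dots,x\mapsto f(x/\lambda_n)$ are linearly independent; that is, if $c_1,\dots,c_n\in\mathbb{C}$ satisfy $\sum_{k=1}^n c_k f(x/\lambda_k)=0$ for all $x\ge 0$, then $c_1=\dots=c_n=0$. *)

theory Defs
  imports "HOL-Analysis.Analysis"
begin

end

(*
  Writing g(u) = f(e^u) turns the relation into the delay equation
  \<Sum>k c_k g(u - b_k) = 0 with distinct delays b_k = ln \<lambda>_k, which after a translation are
  all positive; g is continuous, bounded and tends to 0 at +\<infinity>.  With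
  P(s) = \<Sum>k c_k e^(-s b_k), Laplace transforms of g on [0,\<infinity>) and of g(-u) on [0,\<infinity>) give
  P(s) L(s) = -E(s) for Re s > 0 and P(s) L\<^sup>-(-s) = E(s) for Re s < 0, where E is entire
  and collects the values of g on [-b_k, 0].  Hence |E/P| \<le> B/|Re s| off the imaginary axis,
  and on the axis the singularities of E/P are removable because g \<rightarrow> 0 at +\<infinity>.  The
  resulting entire function is bounded (maximum modulus principle) and therefore, by Liouville,
  zero.  So L vanishes at all large integers N + j, i.e. g e^(-Nu) is orthogonal to every
  polynomial in e^(-u); Weierstrass approximation of conj g(u) in the variable e^(-u) gives
  \<integral>|g|\<^sup>2 e^(-Nu) = 0, so g = 0 on [0,\<infinity>), and by translation everywhere.
*)

theory Submission
  imports Defs "HOL-Complex_Analysis.Complex_Analysis" "HOL-Real_Asymp.Real_Asymp"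
begin

section \<open>Laplace transforms on half-lines\<close>

definition laplace_from :: "(real \<Rightarrow> complex) \<Rightarrow> real \<Rightarrow> complex \<Rightarrow> complex" where
  "laplace_from h a s = integral {a..} (\<lambda>u. h u * exp (- (s * of_real u)))"

lemma norm_laplace_integrand_le:
  fixes h :: "real \<Rightarrow> complex"
  assumes "norm (h u) \<le> B"
  shows "norm (h u * exp (- (s * of_real u))) \<le> B * exp (- (Re s * u))"
  using assms by (simp add: norm_mult mult_right_mono)

lemma integrable_on_const_times_exp_neg:
  assumes "(r::real) > 0"
  shows "(\<lambda>u. B * exp (- (r * u))) integrable_on {a..}"
  using integrable_on_mult_right[OF integrable_on_exp_minus_to_infinity[OF assms, of a], of B]
  by simp

lemma laplace_integrand_absolutely_integrable:
  fixes h :: "real \<Rightarrow> complex"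
  assumes cont: "continuous_on UNIV h" and bd: "\<And>u. norm (h u) \<le> B" and s: "Re s > 0"
  shows "(\<lambda>u. h u * exp (- (s * of_real u))) absolutely_integrable_on {a..}"
proof (rule measurable_bounded_by_integrable_imp_absolutely_integrable)
  show "(\<lambda>u. h u * exp (- (s * of_real u))) \<in> borel_measurable (lebesgue_on {a..})"
    by (rule continuous_imp_measurable_on_sets_lebesgue)
       (auto intro!: continuous_intros continuous_on_subset[OF cont])
qed (use s bd in \<open>auto intro: integrable_on_const_times_exp_neg norm_laplace_integrand_le\<close>)

lemma laplace_integrand_integrable:
  fixes h :: "real \<Rightarrow> complex"
  assumes "continuous_on UNIV h" and "\<And>u. norm (h u) \<le> B" and "Re s > 0"
  shows "(\<lambda>u. h u * exp (- (s * of_real u))) integrable_on {a..}"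
  using laplace_integrand_absolutely_integrable[OF assms] by (rule set_lebesgue_integral_eq_integral(1))

lemma norm_laplace_from_le:
  fixes h :: "real \<Rightarrow> complex"
  assumes cont: "continuous_on UNIV h" and bd: "\<And>u. norm (h u) \<le> B" and s: "Re s > 0"
  shows "norm (laplace_from h a s) \<le> B * exp (- (Re s * a)) / Re s"
proof -
  have "norm (laplace_from h a s) \<le> integral {a..} (\<lambda>u. B * exp (- (Re s * u)))"
    unfolding laplace_from_def
    by (intro integral_norm_bound_integral laplace_integrand_integrable[OF assms]
        norm_laplace_integrand_le[OF bd] integrable_on_const_times_exp_neg[OF s])
  also have "\<dots> = B * exp (- (Re s * a)) / Re s"
    using has_integral_exp_minus_to_infinity[OF s, of a]
    by (subst integral_mult_right) (simp add: integral_unique)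
  finally show ?thesis .
qed

lemma integral_translation:
  fixes k :: "real \<Rightarrow> complex"
  assumes k: "k absolutely_integrable_on T"
  shows "(\<lambda>u. k (u - d)) absolutely_integrable_on ((+) d ` T)"
    and "integral ((+) d ` T) (\<lambda>u. k (u - d)) = integral T k"
proof -
  let ?F = "\<lambda>x. indicator T x *\<^sub>R k x"
  have "x \<in> (+) d ` T \<longleftrightarrow> x - d \<in> T" for x
    by (auto simp: image_iff intro!: bexI[of _ "x - d"])
  then have eq: "(\<lambda>x. indicator ((+) d ` T) x *\<^sub>R k (x - d)) = (\<lambda>x. ?F (-d + 1 * x))"
    by (simp add: indicator_def)
  have "integrable lebesgue ?F"
    using k unfolding set_integrable_def .
  then have G: "integrable lebesgue (\<lambda>x. ?F (-d + 1 * x))"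
    by (subst lebesgue_integrable_real_affine_iff) auto
  show shifted: "(\<lambda>u. k (u - d)) absolutely_integrable_on ((+) d ` T)"
    unfolding set_integrable_def eq by (rule G)
  have "integral ((+) d ` T) (\<lambda>u. k (u - d)) = (\<integral>x. ?F (-d + 1 * x) \<partial>lebesgue)"
    using set_lebesgue_integral_eq_integral(2)[OF shifted] unfolding set_lebesgue_integral_def eq
    by simp
  also have "\<dots> = (\<integral>x. ?F x \<partial>lebesgue)"
    using lebesgue_integral_real_affine[of 1 ?F "-d"] by simp
  also have "\<dots> = integral T k"
    using set_lebesgue_integral_eq_integral(2)[OF k] unfolding set_lebesgue_integral_def .
  finally show "integral ((+) d ` T) (\<lambda>u. k (u - d)) = integral T k" .
qed

lemma laplace_from_shift:
  fixes h :: "real \<Rightarrow> complex"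
  assumes cont: "continuous_on UNIV h" and bd: "\<And>u. norm (h u) \<le> B" and s: "Re s > 0"
  shows "integral {a..} (\<lambda>u. h (u - d) * exp (- (s * of_real u)))
           = exp (- (s * of_real d)) * laplace_from h (a - d) s"
proof -
  let ?k = "\<lambda>v. h v * exp (- (s * of_real v))"
  have "integral {a..} (\<lambda>u. h (u - d) * exp (- (s * of_real u)))
      = integral {a..} (\<lambda>u. exp (- (s * of_real d)) * ?k (u - d))"
    by (intro integral_cong) (simp add: algebra_simps flip: exp_add)
  also have "\<dots> = exp (- (s * of_real d)) * integral {a - d..} ?k"
    using integral_translation(2)[OF laplace_integrand_absolutely_integrable[OF assms, of "a - d"], of d]
    by simp
  finally show ?thesis by (simp add: laplace_from_def)
qed

lemma laplace_from_split:
  fixes h :: "real \<Rightarrow> complex"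
  assumes cont: "continuous_on UNIV h" and bd: "\<And>u. norm (h u) \<le> B" and s: "Re s > 0"
    and "a \<le> a'"
  shows "laplace_from h a s = integral {a..a'} (\<lambda>u. h u * exp (- (s * of_real u))) + laplace_from h a' s"
proof -
  let ?k = "\<lambda>v. h v * exp (- (s * of_real v))"
  have "(?k has_integral integral {a..a'} ?k) {a..a'}"
    by (intro integrable_integral integrable_continuous_interval continuous_intros
        continuous_on_subset[OF cont]) auto
  moreover have "(?k has_integral laplace_from h a' s) {a'..}"
    unfolding laplace_from_def using laplace_integrand_integrable[OF cont bd s]
    by (rule integrable_integral)
  ultimately have "(?k has_integral (integral {a..a'} ?k + laplace_from h a' s)) ({a..a'} \<union> {a'..})"
    by (rule has_integral_Un) (auto intro: negligible_subset[of "{a'}"])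
  moreover have "{a..a'} \<union> {a'..} = {a..}" using \<open>a \<le> a'\<close> by auto
  ultimately show ?thesis unfolding laplace_from_def by (simp add: integral_unique)
qed

lemma holomorphic_on_laplace_integral_Icc:
  fixes h :: "real \<Rightarrow> complex"
  assumes cont: "continuous_on UNIV h"
  shows "(\<lambda>s. integral {a..b} (\<lambda>v. h v * exp (- (s * of_real v)))) holomorphic_on UNIV"
proof -
  have "(\<lambda>s. integral (cbox a b) (\<lambda>v. h v * exp (- (s * of_real v)))) holomorphic_on UNIV"
  proof (rule leibniz_rule_holomorphic[where fx = "\<lambda>s v. h v * exp (- (s * of_real v)) * (- of_real v)"])
    show "(\<lambda>v. h v * exp (- (s * of_real v))) integrable_on cbox a b" for s
      by (intro integrable_continuous continuous_intros continuous_on_subset[OF cont]) auto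
    show "continuous_on (UNIV \<times> cbox a b) (\<lambda>(s, t). h t * exp (- (s * of_real t)) * (- of_real t))"
      by (auto simp: case_prod_unfold intro!: continuous_intros continuous_on_compose2[OF cont])
  qed (auto intro!: derivative_eq_intros)
  then show ?thesis by simp
qed

lemma norm_laplace_from_le_tail:
  fixes h :: "real \<Rightarrow> complex"
  assumes cont: "continuous_on UNIV h" and bd: "\<And>u. norm (h u) \<le> B"
    and tail: "\<And>u. u \<ge> U \<Longrightarrow> norm (h u) \<le> \<eta>" and U: "U \<ge> 0" and s: "Re s > 0"
  shows "norm (laplace_from h 0 s) \<le> B * U + \<eta> / Re s"
proof -
  let ?k = "\<lambda>u. h u * exp (- (s * of_real u))"
  have "norm (integral {0..U} ?k) \<le> integral {0..U} (\<lambda>_. B)"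
  proof (rule integral_norm_bound_integral)
    show "?k integrable_on {0..U}"
      by (intro integrable_continuous_interval continuous_intros continuous_on_subset[OF cont]) auto
    show "(\<lambda>_. B) integrable_on {0..U}"
      by (rule integrable_const_ivl)
    fix u assume "u \<in> {0..U}"
    then have "exp (- (Re s * u)) \<le> 1"
      using s by simp
    then have "B * exp (- (Re s * u)) \<le> B"
      using mult_left_le[OF _ order_trans[OF norm_ge_zero bd]] by blast
    then show "norm (?k u) \<le> B"
      using norm_laplace_integrand_le[of h u B s] bd[of u] by linarith
  qed
  then have head: "norm (integral {0..U} ?k) \<le> B * U"
    using U by (simp add: mult.commute)
  define hU where "hU = (\<lambda>u. h (max u U))"
  have contU: "continuous_on UNIV hU"
    unfolding hU_def by (intro continuous_on_compose2[OF cont] continuous_intros) auto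
  have bdU: "norm (hU u) \<le> \<eta>" for u
    unfolding hU_def by (rule tail) simp
  have "laplace_from h U s = laplace_from hU U s"
    unfolding laplace_from_def hU_def by (intro integral_cong) (auto simp: max_def)
  also have "norm \<dots> \<le> \<eta> * exp (- (Re s * U)) / Re s"
    by (rule norm_laplace_from_le[OF contU bdU s])
  also have "\<dots> \<le> \<eta> / Re s"
  proof -
    have "exp (- (Re s * U)) \<le> 1"
      using s U by simp
    then have "\<eta> * exp (- (Re s * U)) \<le> \<eta>"
      using mult_left_le[OF _ order_trans[OF norm_ge_zero bdU]] by blast
    then show ?thesis
      using s by (simp add: divide_right_mono)
  qed
  finally have "norm (laplace_from h U s) \<le> \<eta> / Re s" .
  then show ?thesis
    unfolding laplace_from_split[OF cont bd s U] by (rule norm_triangle_le[OF add_mono[OF head]])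
qed

lemma laplace_from_boundary_limit:
  fixes h :: "real \<Rightarrow> complex"
  assumes cont: "continuous_on UNIV h" and bd: "\<And>u. norm (h u) \<le> B"
    and lim: "(h \<longlongrightarrow> 0) at_top" and z: "Re z = 0"
  shows "((\<lambda>\<sigma>. of_real \<sigma> * laplace_from h 0 (z + of_real \<sigma>)) \<longlongrightarrow> 0) (at_right 0)"
proof (rule tendstoI)
  fix \<epsilon> :: real assume "\<epsilon> > 0"
  then obtain U0 where "\<And>u. u \<ge> U0 \<Longrightarrow> norm (h u) < \<epsilon> / 2"
    using tendstoD[OF lim, of "\<epsilon> / 2"] unfolding eventually_at_top_linorder by auto
  then obtain U where U: "U \<ge> 0" "\<And>u. u \<ge> U \<Longrightarrow> norm (h u) \<le> \<epsilon> / 2"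
    by (metis less_imp_le max.bounded_iff max.cobounded2)
  have "((\<lambda>\<sigma>. \<sigma> * (B * U)) \<longlongrightarrow> 0 * (B * U)) (at_right 0)"
    by (intro tendsto_intros)
  then have "eventually (\<lambda>\<sigma>. \<sigma> * (B * U) < \<epsilon> / 2) (at_right 0)"
    using \<open>\<epsilon> > 0\<close> by (intro order_tendstoD(2)) auto
  moreover have "eventually (\<lambda>\<sigma>::real. \<sigma> > 0) (at_right 0)"
    by (simp add: eventually_at_right_less)
  ultimately show "eventually (\<lambda>\<sigma>. dist (of_real \<sigma> * laplace_from h 0 (z + of_real \<sigma>)) 0 < \<epsilon>) (at_right 0)"
  proof eventually_elim
    case (elim \<sigma>)
    have Re: "Re (z + of_real \<sigma>) = \<sigma>" using z by simp
    have "norm (laplace_from h 0 (z + of_real \<sigma>)) \<le> B * U + \<epsilon> / 2 / Re (z + of_real \<sigma>)"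
      by (rule norm_laplace_from_le_tail[OF cont bd]) (use U Re elim in auto)
    then have "norm (laplace_from h 0 (z + of_real \<sigma>)) \<le> B * U + \<epsilon> / 2 / \<sigma>"
      by (simp only: Re)
    then have "\<sigma> * norm (laplace_from h 0 (z + of_real \<sigma>)) \<le> \<sigma> * (B * U + \<epsilon> / 2 / \<sigma>)"
      using elim by (intro mult_left_mono) auto
    also have "\<dots> = \<sigma> * (B * U) + \<epsilon> / 2"
      using elim by (simp add: field_simps)
    finally have "\<sigma> * norm (laplace_from h 0 (z + of_real \<sigma>)) \<le> \<sigma> * (B * U) + \<epsilon> / 2" .
    with elim show ?case by (simp add: norm_mult)
  qed
qed

section \<open>Entire functions bounded by a multiple of 1/|Re s|\<close>

lemma norm_one_plus_square_on_unit_circle: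
  fixes d :: complex
  assumes "norm d = 1"
  shows "norm (1 + d ^ 2) = 2 * \<bar>Re d\<bar>"
proof -
  have "(Re d)^2 + (Im d)^2 = 1"
    using assms by (simp add: cmod_def)
  then have "1 + d ^ 2 = 2 * of_real (Re d) * d"
    by (simp add: complex_eq_iff power2_eq_square algebra_simps)
  then show ?thesis using assms by (simp add: norm_mult)
qed

text \<open>Near the imaginary axis the bound is recovered by the maximum modulus principle applied to
  \<open>G w * (1 + (w - i Im s)\<^sup>2)\<close> on the unit disc around \<open>i Im s\<close>: the
  polynomial factor vanishes to first order exactly where the circle meets the axis.\<close>

lemma entire_bounded_if_bounded_by_inverse_abs_Re:
  fixes G :: "complex \<Rightarrow> complex"
  assumes hol: "G holomorphic_on UNIV" and bnd: "\<And>s. Re s \<noteq> 0 \<Longrightarrow> norm (G s) \<le> B / \<bar>Re s\<bar>"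
  shows "norm (G s) \<le> 2 * B"
proof -
  have "norm (G 1) \<le> B" using bnd[of 1] by simp
  then have B: "B \<ge> 0" by (rule order_trans[OF norm_ge_zero])
  show ?thesis
  proof (cases "\<bar>Re s\<bar> > 1")
    case True
    then have "B / \<bar>Re s\<bar> \<le> B" using B by (simp add: divide_le_eq mult_le_cancel_left1)
    then show ?thesis using bnd[of s] True B by linarith
  next
    case False
    define c where "c = \<i> * of_real (Im s)"
    define H where "H = (\<lambda>w. G w * (1 + (w - c) ^ 2))"
    have "norm (H s) \<le> 2 * B"
    proof (rule maximum_modulus_frontier[of H "cball c 1"])
      show "H holomorphic_on interior (cball c 1)"
        unfolding H_def by (intro holomorphic_intros holomorphic_on_subset[OF hol]) auto
      show "continuous_on (closure (cball c 1)) H"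
        unfolding H_def
        by (intro continuous_intros continuous_on_subset[OF holomorphic_on_imp_continuous_on[OF hol]]) auto
      show "s \<in> cball c 1"
        using False by (simp add: c_def dist_norm cmod_def complex_eq_iff)
    next
      fix w assume "w \<in> frontier (cball c 1)"
      then have "norm (w - c) = 1" by (simp add: dist_norm norm_minus_commute)
      then have "norm (H w) = norm (G w) * (2 * \<bar>Re w\<bar>)"
        using norm_one_plus_square_on_unit_circle by (simp add: H_def norm_mult c_def)
      also have "\<dots> \<le> 2 * B"
        using bnd[of w] B by (cases "Re w = 0") (auto simp: field_simps dest: mult_right_mono[of _ _ "\<bar>Re w\<bar>"])
      finally show "norm (H w) \<le> 2 * B" .
    qed simp
    moreover have "norm (H s) = norm (G s) * (1 + (Re s)^2)"
    proof -
      have "1 + (s - c) ^ 2 = of_real (1 + (Re s)^2)"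
        by (simp add: c_def complex_eq_iff power2_eq_square)
      then have "norm (1 + (s - c) ^ 2) = 1 + (Re s)^2"
        by (simp only: norm_of_real) simp
      then show ?thesis by (simp add: H_def norm_mult)
    qed
    moreover have "norm (G s) \<le> norm (G s) * (1 + (Re s)^2)"
      by (simp add: mult_le_cancel_left1)
    ultimately show ?thesis by linarith
  qed
qed

lemma entire_eq_0_if_bounded_by_inverse_abs_Re:
  fixes G :: "complex \<Rightarrow> complex"
  assumes hol: "G holomorphic_on UNIV" and bnd: "\<And>s. Re s \<noteq> 0 \<Longrightarrow> norm (G s) \<le> B / \<bar>Re s\<bar>"
  shows "G s = 0"
proof -
  have "G constant_on UNIV"
    by (rule Liouville_theorem[OF hol])
       (use entire_bounded_if_bounded_by_inverse_abs_Re[OF hol bnd] in \<open>auto simp: bounded_iff\<close>)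
  then obtain k where k: "\<And>w. G w = k" unfolding constant_on_def by blast
  have lim: "((\<lambda>\<sigma>. B / \<bar>\<sigma>\<bar>) \<longlongrightarrow> 0) at_top"
    by (rule tendsto_divide_0[OF tendsto_const filterlim_at_top_imp_at_infinity[OF filterlim_abs_real]])
  have ev: "eventually (\<lambda>\<sigma>. norm k \<le> B / \<bar>\<sigma>\<bar>) at_top"
    using eventually_gt_at_top[of "0::real"]
  proof eventually_elim
    case (elim \<sigma>)
    then show ?case using bnd[of "of_real \<sigma>"] k by simp
  qed
  have "norm k \<le> 0"
    by (rule tendsto_le[OF trivial_limit_at_top_linorder lim tendsto_const ev])
  then show ?thesis using k by simp
qed

lemma not_essential_tendsto_if_tendsto_along:
  fixes f :: "complex \<Rightarrow> complex"
  assumes ne: "not_essential f z" and p: "filterlim p (at z) F" and F: "F \<noteq> bot"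
    and lim: "((\<lambda>x. f (p x)) \<longlongrightarrow> L) F"
  shows "(f \<longlongrightarrow> L) (at z)"
proof -
  from ne obtain c where "(f \<longlongrightarrow> c) (at z) \<or> is_pole f z"
    unfolding not_essential_def by blast
  then show ?thesis
  proof
    assume c: "(f \<longlongrightarrow> c) (at z)"
    have "((\<lambda>x. f (p x)) \<longlongrightarrow> c) F"
      by (rule filterlim_compose[OF c p])
    then have "c = L" using tendsto_unique[OF F] lim by blast
    then show ?thesis using c by simp
  next
    assume "is_pole f z"
    then have "filterlim (\<lambda>x. f (p x)) at_infinity F"
      unfolding is_pole_def by (rule filterlim_compose[OF _ p])
    then show ?thesis
      using not_tendsto_and_filterlim_at_infinity[OF F lim] by simp
  qed
qed

lemma tendsto_at_if_times_linear_tendsto_0: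
  fixes f :: "complex \<Rightarrow> complex"
  assumes iso: "isolated_singularity_at f z" and lin: "((\<lambda>w. (w - z) * f w) \<longlongrightarrow> 0) (at z)"
  shows "\<exists>c. (f \<longlongrightarrow> c) (at z)"
proof -
  obtain r where r: "r > 0" "f analytic_on ball z r - {z}"
    using iso unfolding isolated_singularity_at_def by blast
  then obtain g where g: "g holomorphic_on ball z r" "\<And>w. w \<in> ball z r - {z} \<Longrightarrow> g w = f w"
    using holomorphic_on_extend_lim[of f "ball z r" z] lin analytic_imp_holomorphic by auto
  have "isCont g z"
    using g(1) r(1) centre_in_ball continuous_on_eq_continuous_at holomorphic_on_imp_continuous_on open_ball
    by blast
  then have "(g \<longlongrightarrow> g z) (at z)"
    by (simp add: isCont_def)
  moreover have "eventually (\<lambda>w. g w = f w) (at z)"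
    unfolding eventually_at using r g(2) by (auto intro!: exI[of _ r] simp: dist_commute)
  ultimately show ?thesis by (blast intro: Lim_transform_eventually)
qed

lemma filterlim_plus_of_real_at_right:
  fixes z :: complex
  shows "filterlim (\<lambda>\<sigma>::real. z + of_real \<sigma>) (at z) (at_right 0)"
proof (rule filterlim_atI)
  show "((\<lambda>\<sigma>::real. z + of_real \<sigma>) \<longlongrightarrow> z) (at_right 0)"
    by (auto intro!: tendsto_eq_intros)
  show "eventually (\<lambda>\<sigma>. z + of_real \<sigma> \<noteq> z) (at_right (0::real))"
    using eventually_at_right_less[of "0::real"] by eventually_elim auto
qed

lemma entire_quotient_isolated_not_essential:
  fixes f g :: "complex \<Rightarrow> complex"
  assumes f: "f analytic_on UNIV" and g: "g analytic_on UNIV"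
  shows "isolated_singularity_at (\<lambda>w. f w / g w) z" and "not_essential (\<lambda>w. f w / g w) z"
proof -
  have "f analytic_on {z}" "g analytic_on {z}"
    using f g analytic_on_subset by blast+
  then show "isolated_singularity_at (\<lambda>w. f w / g w) z" "not_essential (\<lambda>w. f w / g w) z"
    by (simp_all add: isolated_singularity_at_divide not_essential_divide
        not_essential_analytic isolated_singularity_at_analytic)
qed

lemma quotient_times_linear_tendsto_0:
  fixes P E :: "complex \<Rightarrow> complex"
  assumes holP: "P holomorphic_on UNIV" and holE: "E holomorphic_on UNIV" and nz: "P \<beta> \<noteq> 0"
    and bnd: "\<And>s. Re s \<noteq> 0 \<Longrightarrow> P s \<noteq> 0 \<Longrightarrow> norm (E s / P s) \<le> B / \<bar>Re s\<bar>"
    and boundary: "\<And>z. Re z = 0 \<Longrightarrow>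
       ((\<lambda>\<sigma>. of_real \<sigma> * (E (z + of_real \<sigma>) / P (z + of_real \<sigma>))) \<longlongrightarrow> 0) (at_right 0)"
  shows "((\<lambda>w. (w - z) * (E w / P w)) \<longlongrightarrow> 0) (at z)"
proof (cases "Re z = 0")
  case True
  have "E analytic_on UNIV" "P analytic_on UNIV"
    using holE holP by (simp_all add: analytic_on_open)
  then have "(\<lambda>w. (w - z) * E w) analytic_on UNIV" "P analytic_on UNIV"
    by (auto intro!: analytic_intros)
  from entire_quotient_isolated_not_essential(2)[OF this]
  have ne: "not_essential (\<lambda>w. (w - z) * (E w / P w)) z"
    by simp
  show ?thesis
    by (rule not_essential_tendsto_if_tendsto_along[OF ne filterlim_plus_of_real_at_right
          trivial_limit_at_right_real])
       (use boundary[OF True] in simp)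
next
  case False
  have "((\<lambda>w. \<bar>Re w\<bar>) \<longlongrightarrow> \<bar>Re z\<bar>) (at z)"
    by (intro tendsto_rabs tendsto_Re tendsto_ident_at)
  then have "eventually (\<lambda>w. \<bar>Re w\<bar> > \<bar>Re z\<bar> / 2) (at z)"
    by (rule order_tendstoD(1)) (use False in auto)
  moreover have "eventually (\<lambda>w. P w \<noteq> 0) (at z)"
    using non_zero_neighbour_alt[OF holP open_UNIV connected_UNIV _ _ nz, of z]
    by (auto elim: eventually_mono)
  ultimately have "eventually (\<lambda>w. norm ((w - z) * (E w / P w)) \<le> norm (w - z) * (2 * B / \<bar>Re z\<bar>)) (at z)"
  proof eventually_elim
    case (elim w)
    have Rew: "\<bar>Re w\<bar> > 0" using elim(1) False by linarith
    then have Fw: "norm (E w / P w) \<le> B / \<bar>Re w\<bar>"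
      by (intro bnd elim(2)) simp
    have "B \<ge> 0"
      using order_trans[OF norm_ge_zero Fw] Rew by (simp add: zero_le_divide_iff)
    have "B / \<bar>Re w\<bar> \<le> B / (\<bar>Re z\<bar> / 2)"
      by (rule divide_left_mono) (use \<open>B \<ge> 0\<close> elim(1) False in auto)
    with Fw have "norm (E w / P w) \<le> B / (\<bar>Re z\<bar> / 2)"
      by (rule order_trans)
    also have "\<dots> = 2 * B / \<bar>Re z\<bar>"
      by (simp add: mult.commute)
    finally have Fz: "norm (E w / P w) \<le> 2 * B / \<bar>Re z\<bar>" .
    show ?case
      unfolding norm_mult by (rule mult_left_mono[OF Fz norm_ge_zero])
  qed
  moreover have "((\<lambda>w. w - z) \<longlongrightarrow> 0) (at z)"
    by (rule LIM_zero[OF tendsto_ident_at])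
  ultimately show ?thesis by (rule tendsto_0_le[rotated])
qed

lemma entire_quotient_extends:
  fixes P E :: "complex \<Rightarrow> complex"
  assumes holP: "P holomorphic_on UNIV" and holE: "E holomorphic_on UNIV"
    and lin: "\<And>z. ((\<lambda>w. (w - z) * (E w / P w)) \<longlongrightarrow> 0) (at z)"
  obtains G where "G holomorphic_on UNIV" "\<And>w. P w \<noteq> 0 \<Longrightarrow> G w = E w / P w"
proof
  define F where "F w = E w / P w" for w
  have ana: "E analytic_on UNIV" "P analytic_on UNIV"
    using holE holP by (simp_all add: analytic_on_open)
  have iso: "isolated_singularity_at F z" for z
    unfolding F_def[abs_def] using entire_quotient_isolated_not_essential(1)[OF ana] .
  have "remove_sings F analytic_on {z}" for z
  proof -
    obtain c where "(F \<longlongrightarrow> c) (at z)"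
      using tendsto_at_if_times_linear_tendsto_0[OF iso] lin unfolding F_def by blast
    then show ?thesis by (rule remove_sings_analytic_at[OF iso])
  qed
  then show "remove_sings F holomorphic_on UNIV"
    by (intro analytic_imp_holomorphic) (subst analytic_on_analytic_at, simp)
  fix w assume "P w \<noteq> 0"
  have "E analytic_on {w}" "P analytic_on {w}"
    using ana analytic_on_subset by blast+
  then have "F analytic_on {w}"
    unfolding F_def[abs_def] using \<open>P w \<noteq> 0\<close> by (intro analytic_on_divide) auto
  then show "remove_sings F w = E w / P w"
    unfolding F_def[symmetric] by (rule remove_sings_at_analytic)
qed

lemma quotient_eq_0_if_bounded_by_inverse_abs_Re:
  fixes P E :: "complex \<Rightarrow> complex"
  assumes holP: "P holomorphic_on UNIV" and holE: "E holomorphic_on UNIV" and nz: "P \<beta> \<noteq> 0"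
    and bnd: "\<And>s. Re s \<noteq> 0 \<Longrightarrow> P s \<noteq> 0 \<Longrightarrow> norm (E s / P s) \<le> B / \<bar>Re s\<bar>"
    and boundary: "\<And>z. Re z = 0 \<Longrightarrow>
       ((\<lambda>\<sigma>. of_real \<sigma> * (E (z + of_real \<sigma>) / P (z + of_real \<sigma>))) \<longlongrightarrow> 0) (at_right 0)"
    and Ps: "P s \<noteq> 0"
  shows "E s = 0"
proof -
  obtain G where holG: "G holomorphic_on UNIV" and GF: "\<And>w. P w \<noteq> 0 \<Longrightarrow> G w = E w / P w"
    using entire_quotient_extends[OF holP holE quotient_times_linear_tendsto_0[OF assms(1-5)]] by blast
  have "norm (G w) \<le> B / \<bar>Re w\<bar>" if Re: "Re w \<noteq> 0" for w
  proof (rule tendsto_le[of "at w"])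
    have "isCont G w"
      using holG holomorphic_on_imp_continuous_on continuous_on_eq_continuous_at by blast
    then show "((\<lambda>v. norm (G v)) \<longlongrightarrow> norm (G w)) (at w)"
      by (intro tendsto_intros) (simp add: isCont_def)
    have lim_Re: "(Re \<longlongrightarrow> Re w) (at w)"
      by (rule tendsto_Re[OF tendsto_ident_at])
    then show "((\<lambda>v. B / \<bar>Re v\<bar>) \<longlongrightarrow> B / \<bar>Re w\<bar>) (at w)"
      using Re by (intro tendsto_intros) auto
    have "eventually (\<lambda>v. Re v \<noteq> 0) (at w)"
      by (rule tendsto_imp_eventually_ne[OF lim_Re Re])
    moreover have "eventually (\<lambda>v. P v \<noteq> 0) (at w)"
      using non_zero_neighbour_alt[OF holP open_UNIV connected_UNIV _ _ nz, of w]
      by (auto elim: eventually_mono)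
    ultimately show "eventually (\<lambda>v. norm (G v) \<le> B / \<bar>Re v\<bar>) (at w)"
    proof eventually_elim
      case (elim v)
      then show ?case using GF[OF elim(2)] bnd[OF elim] by simp
    qed
  qed simp
  then have "G s = 0"
    by (rule entire_eq_0_if_bounded_by_inverse_abs_Re[OF holG])
  then show ?thesis using GF[OF Ps] Ps by simp
qed

section \<open>Vanishing Laplace moments\<close>

lemma continuous_on_compose_neg_ln:
  fixes h :: "real \<Rightarrow> 'a::real_normed_vector"
  assumes cont: "continuous_on UNIV h" and lim: "(h \<longlongrightarrow> 0) at_top"
  shows "continuous_on {0..1} (\<lambda>t. if t \<le> 0 then 0 else h (- ln t))"
proof -
  let ?\<psi> = "\<lambda>t::real. if t \<le> 0 then 0 else h (- ln t)"
  have "continuous (at t within {0..1}) ?\<psi>" if t: "t \<in> {0..1}" for t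
  proof (cases "t = 0")
    case True
    have "filterlim (\<lambda>x. - ln x) at_top (at_right (0::real))"
      using ln_at_0 by (simp add: filterlim_uminus_at_top)
    then have "((\<lambda>x. h (- ln x)) \<longlongrightarrow> 0) (at_right 0)"
      by (rule filterlim_compose[OF lim])
    moreover have "eventually (\<lambda>x. h (- ln x) = ?\<psi> x) (at_right (0::real))"
      using eventually_at_right_less[of "0::real"] by eventually_elim auto
    ultimately have "(?\<psi> \<longlongrightarrow> 0) (at_right 0)"
      by (rule Lim_transform_eventually)
    then show ?thesis
      using True by (simp add: continuous_within at_within_Icc_at_right)
  next
    case False
    then have "t > 0" using t by auto
    have "isCont (\<lambda>x. - ln x) t"
      using \<open>t > 0\<close> by (intro continuous_intros) auto
    moreover have "isCont h (- ln t)"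
      using cont by (simp add: continuous_on_eq_continuous_at)
    ultimately have "isCont (\<lambda>x. h (- ln x)) t"
      by (rule isCont_o2)
    moreover have "eventually (\<lambda>x. h (- ln x) = ?\<psi> x) (nhds t)"
      using eventually_nhds_in_open[of "{0<..}" t] \<open>t > 0\<close> by (auto elim!: eventually_mono)
    ultimately have "isCont ?\<psi> t"
      by (rule isCont_cong[THEN iffD1, rotated])
    then show ?thesis by (rule continuous_at_imp_continuous_at_within)
  qed
  then show ?thesis by (simp add: continuous_on_eq_continuous_within)
qed

lemma sum_atMost_pad:
  fixes c :: "nat \<Rightarrow> 'a::semiring_1"
  assumes "m \<le> n"
  shows "(\<Sum>i\<le>n. (if i \<le> m then c i else 0) * x ^ i) = (\<Sum>i\<le>m. c i * x ^ i)"
proof -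
  have "(\<Sum>i\<le>n. (if i \<le> m then c i else 0) * x ^ i) = (\<Sum>i\<le>n. if i \<in> {..m} then c i * x ^ i else 0)"
    by (intro sum.cong) auto
  also have "\<dots> = (\<Sum>i\<in>{..n} \<inter> {..m}. c i * x ^ i)"
    by (rule sum.inter_restrict[symmetric]) simp
  also have "{..n} \<inter> {..m} = {..m}"
    using assms by auto
  finally show ?thesis .
qed

lemma complex_polynomial_approximation_Icc:
  fixes \<psi> :: "real \<Rightarrow> complex"
  assumes cont: "continuous_on {0..1} \<psi>" and \<epsilon>: "\<epsilon> > 0"
  obtains n :: nat and a :: "nat \<Rightarrow> complex"
  where "\<And>t. t \<in> {0..1} \<Longrightarrow> norm (\<psi> t - (\<Sum>i\<le>n. a i * of_real t ^ i)) \<le> \<epsilon>"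
proof -
  have \<epsilon>2: "\<epsilon> / 2 > 0" using \<epsilon> by simp
  have cRe: "continuous_on {0..1} (\<lambda>t. Re (\<psi> t))" and cIm: "continuous_on {0..1} (\<lambda>t. Im (\<psi> t))"
    by (intro continuous_intros cont)+
  obtain pr where
      pr: "real_polynomial_function pr" "\<And>t. t \<in> {0..1} \<Longrightarrow> \<bar>Re (\<psi> t) - pr t\<bar> < \<epsilon> / 2"
    using Stone_Weierstrass_real_polynomial_function[OF compact_Icc cRe \<epsilon>2] by blast
  obtain pi where
      pi: "real_polynomial_function pi" "\<And>t. t \<in> {0..1} \<Longrightarrow> \<bar>Im (\<psi> t) - pi t\<bar> < \<epsilon> / 2"
    using Stone_Weierstrass_real_polynomial_function[OF compact_Icc cIm \<epsilon>2] by blast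
  obtain ar n1 where ar: "pr = (\<lambda>x. \<Sum>i\<le>n1. ar i * x ^ i)"
    using real_polynomial_function_imp_sum[OF pr(1)] by blast
  obtain ai n2 where ai: "pi = (\<lambda>x. \<Sum>i\<le>n2. ai i * x ^ i)"
    using real_polynomial_function_imp_sum[OF pi(1)] by blast
  define ar' where "ar' i = (if i \<le> n1 then ar i else 0)" for i
  define ai' where "ai' i = (if i \<le> n2 then ai i else 0)" for i
  define a where "a i = complex_of_real (ar' i) + \<i> * complex_of_real (ai' i)" for i
  show ?thesis
  proof (rule that[where n = "n1 + n2" and a = a])
    fix t :: real assume t: "t \<in> {0..1}"
    have "(\<Sum>i\<le>n1 + n2. a i * of_real t ^ i)
        = of_real (\<Sum>i\<le>n1 + n2. ar' i * t ^ i) + \<i> * of_real (\<Sum>i\<le>n1 + n2. ai' i * t ^ i)"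
      by (simp add: a_def distrib_right sum.distrib sum_distrib_left mult.assoc)
    also have "\<dots> = of_real (pr t) + \<i> * of_real (pi t)"
      unfolding ar'_def ai'_def ar ai by (simp add: sum_atMost_pad)
    finally have p: "(\<Sum>i\<le>n1 + n2. a i * of_real t ^ i) = of_real (pr t) + \<i> * of_real (pi t)" .
    have "norm (\<psi> t - (of_real (pr t) + \<i> * of_real (pi t))) \<le> \<bar>Re (\<psi> t) - pr t\<bar> + \<bar>Im (\<psi> t) - pi t\<bar>"
      using cmod_le[of "\<psi> t - (of_real (pr t) + \<i> * of_real (pi t))"] by simp
    then show "norm (\<psi> t - (\<Sum>i\<le>n1 + n2. a i * of_real t ^ i)) \<le> \<epsilon>"
      unfolding p using pr(2)[OF t] pi(2)[OF t] by linarith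
  qed
qed

lemma integral_exp_polynomial_eq_0:
  fixes g :: "real \<Rightarrow> complex" and a :: "nat \<Rightarrow> complex"
  assumes cont: "continuous_on UNIV g" and bd: "\<And>u. norm (g u) \<le> B"
    and N: "N \<ge> 1" and mom: "\<And>j. laplace_from g 0 (of_nat (N + j)) = 0"
  shows "(\<lambda>u. g u * exp (- (of_nat N * of_real u)) * (\<Sum>i\<le>n. a i * of_real (exp (- u)) ^ i))
           integrable_on {0..}"
    and "integral {0..} (\<lambda>u. g u * exp (- (of_nat N * of_real u)) * (\<Sum>i\<le>n. a i * of_real (exp (- u)) ^ i))
           = 0"
proof -
  let ?X = "\<lambda>u. g u * exp (- (of_nat N * of_real u)) * (\<Sum>i\<le>n. a i * of_real (exp (- u)) ^ i)"
  have "exp (- (of_nat N * of_real u)) * of_real (exp (- u)) ^ i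
        = (exp (- (of_nat (N + i) * of_real u)) :: complex)" for u :: real and i
  proof -
    have "(of_real (exp (- u)) :: complex) ^ i = exp (- of_real u) ^ i"
      by (simp add: of_real_exp)
    also have "\<dots> = exp (of_nat i * (- of_real u))"
      by (rule exp_of_nat_mult[symmetric])
    finally have "(of_real (exp (- u)) :: complex) ^ i = exp (of_nat i * (- of_real u))" .
    then show ?thesis
      by (simp add: algebra_simps flip: exp_add)
  qed
  then have eq: "?X = (\<lambda>u. \<Sum>i\<le>n. a i * (g u * exp (- (of_nat (N + i) * of_real u))))"
    by (simp add: fun_eq_iff sum_distrib_left mult_ac)
  have int: "(\<lambda>u. g u * exp (- (of_nat (N + i) * of_real u))) integrable_on {0..}" for i
    using laplace_integrand_integrable[OF cont bd, of "of_nat (N + i)" 0] N by simp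
  show "?X integrable_on {0..}"
    unfolding eq by (intro integrable_sum integrable_on_mult_right int) simp
  have "integral {0..} ?X = (\<Sum>i\<le>n. a i * laplace_from g 0 (of_nat (N + i)))"
    unfolding eq laplace_from_def
    by (subst integral_sum) (auto intro!: integrable_on_mult_right int simp del: of_nat_add)
  then show "integral {0..} ?X = 0"
    by (simp only: mom) simp
qed

lemma weighted_square_integrable:
  fixes g :: "real \<Rightarrow> complex"
  assumes cont: "continuous_on UNIV g" and bd: "\<And>u. norm (g u) \<le> B" and N: "N \<ge> 1"
  shows "(\<lambda>u. g u * exp (- (of_nat N * of_real u)) * cnj (g u)) integrable_on {0..}"
proof -
  have "continuous_on UNIV (\<lambda>u. g u * cnj (g u))"
    by (intro continuous_intros cont)
  moreover have "norm (g u * cnj (g u)) \<le> B * B" for u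
    by (simp add: norm_mult mult_mono' bd order_trans[OF norm_ge_zero bd])
  moreover have "Re (of_nat N) > 0"
    using N by simp
  ultimately have "(\<lambda>u. g u * cnj (g u) * exp (- (of_nat N * of_real u))) integrable_on {0..}"
    by (rule laplace_integrand_integrable)
  then show ?thesis
    by (simp add: mult_ac)
qed

lemma norm_integral_weighted_square_le:
  fixes g :: "real \<Rightarrow> complex"
  assumes cont: "continuous_on UNIV g" and bd: "\<And>u. norm (g u) \<le> B"
    and lim: "(g \<longlongrightarrow> 0) at_top"
    and N: "N \<ge> 1" and mom: "\<And>j. laplace_from g 0 (of_nat (N + j)) = 0"
    and \<epsilon>: "\<epsilon> > 0"
  shows "norm (integral {0..} (\<lambda>u. g u * exp (- (of_nat N * of_real u)) * cnj (g u))) \<le> \<epsilon> * B / N"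
proof -
  \<comment> \<open>\<open>cnj (g u) = \<psi> (exp (- u))\<close> is approximated by polynomials in \<open>exp (- u)\<close>,
    all of which are orthogonal to \<open>g u * exp (- N u)\<close> by the vanishing moments.\<close>
  define \<psi> where "\<psi> = (\<lambda>t::real. if t \<le> 0 then 0 else cnj (g (- ln t)))"
  have "continuous_on {0..1} \<psi>"
    unfolding \<psi>_def using cont lim
    by (intro continuous_on_compose_neg_ln continuous_intros) (auto intro: tendsto_eq_intros)
  then obtain n a where approx:
      "\<And>t. t \<in> {0..1} \<Longrightarrow> norm (\<psi> t - (\<Sum>i\<le>n. a i * of_real t ^ i)) \<le> \<epsilon>"
    using complex_polynomial_approximation_Icc \<epsilon> by blast
  let ?X = "\<lambda>u. g u * exp (- (of_nat N * of_real u))"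
  let ?p = "\<lambda>u. \<Sum>i\<le>n. a i * of_real (exp (- u)) ^ i"
  have \<psi>_exp: "\<psi> (exp (- u)) = cnj (g u)" for u
    by (simp add: \<psi>_def)
  note int_sq = weighted_square_integrable[OF cont bd N]
  note orth = integral_exp_polynomial_eq_0[OF cont bd N mom, of a n]
  have "integral {0..} (\<lambda>u. ?X u * cnj (g u)) = integral {0..} (\<lambda>u. ?X u * cnj (g u) - ?X u * ?p u)"
    using integral_diff[OF int_sq orth(1)] orth(2) by simp
  also have "norm \<dots> \<le> integral {0..} (\<lambda>u. \<epsilon> * B * exp (- (real N * u)))"
  proof (rule integral_norm_bound_integral)
    show "(\<lambda>u. ?X u * cnj (g u) - ?X u * ?p u) integrable_on {0..}"
      by (rule integrable_diff[OF int_sq orth(1)])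
    show "(\<lambda>u. \<epsilon> * B * exp (- (real N * u))) integrable_on {0..}"
      using N by (intro integrable_on_const_times_exp_neg) auto
    fix u :: real assume "u \<in> {0..}"
    then have "norm (cnj (g u) - ?p u) \<le> \<epsilon>"
      using approx[of "exp (- u)"] by (simp add: \<psi>_exp)
    then have "norm (g u) * norm (cnj (g u) - ?p u) \<le> B * \<epsilon>"
      using bd[of u] \<epsilon> order_trans[OF norm_ge_zero bd] by (intro mult_mono) auto
    moreover have "norm (?X u * cnj (g u) - ?X u * ?p u)
        = norm (g u) * norm (cnj (g u) - ?p u) * exp (- (real N * u))"
    proof -
      have "?X u * cnj (g u) - ?X u * ?p u = ?X u * (cnj (g u) - ?p u)"
        by (simp add: right_diff_distrib)
      moreover have "norm (?X u) = norm (g u) * exp (- (real N * u))"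
        by (simp add: norm_mult norm_exp_eq_Re)
      ultimately show ?thesis
        by (simp add: norm_mult mult_ac)
    qed
    ultimately show "norm (?X u * cnj (g u) - ?X u * ?p u) \<le> \<epsilon> * B * exp (- (real N * u))"
      by (simp add: mult_ac mult_right_mono)
  qed
  also have "\<dots> = \<epsilon> * B / N"
    using has_integral_exp_minus_to_infinity[of "real N" 0] N
    by (subst integral_mult_right) (simp add: integral_unique)
  finally show ?thesis .
qed

lemma continuous_nonneg_integral_eq_0_imp_eq_0:
  fixes q :: "real \<Rightarrow> real"
  assumes cont: "continuous_on UNIV q" and nonneg: "\<And>u. q u \<ge> 0"
    and int: "q integrable_on {0..}" and zero: "integral {0..} q = 0" and u: "u \<ge> 0"
  shows "q u = 0"
proof -
  have int_u: "q integrable_on {0..u+1}"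
    by (intro integrable_continuous_interval continuous_on_subset[OF cont]) auto
  have "integral {0..u+1} q \<le> integral {0..} q"
    by (rule integral_subset_le[OF _ int_u int]) (auto simp: nonneg)
  moreover have "integral {0..u+1} q \<ge> 0"
    by (rule integral_nonneg[OF int_u]) (simp add: nonneg)
  ultimately have "(q has_integral 0) (cbox 0 (u+1))"
    using int_u zero by (simp add: has_integral_iff)
  then show ?thesis
    using has_integral_0_cbox_imp_0[where a=0 and b="u+1" and f=q and x=u] u nonneg
      continuous_on_subset[OF cont, of "cbox 0 (u+1)"] by (auto simp: box_real)
qed

lemma laplace_moments_eq_0_imp_eq_0:
  fixes g :: "real \<Rightarrow> complex"
  assumes cont: "continuous_on UNIV g" and bd: "\<And>u. norm (g u) \<le> B"
    and lim: "(g \<longlongrightarrow> 0) at_top"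
    and N: "N \<ge> 1" and mom: "\<And>j. laplace_from g 0 (of_nat (N + j)) = 0"
    and u: "u \<ge> 0"
  shows "g u = 0"
proof -
  define M where "M = integral {0..} (\<lambda>u. g u * exp (- (of_nat N * of_real u)) * cnj (g u))"
  have "((\<lambda>\<epsilon>. \<epsilon> * B / N) \<longlongrightarrow> 0 * B / N) (at_right 0)"
    using N by (intro tendsto_intros) auto
  moreover have "eventually (\<lambda>\<epsilon>. norm M \<le> \<epsilon> * B / N) (at_right 0)"
    using eventually_at_right_less[of "0::real"]
    by eventually_elim (use norm_integral_weighted_square_le[OF cont bd lim N mom] in \<open>simp add: M_def\<close>)
  ultimately have "norm M \<le> 0"
    by (intro tendsto_le[OF trivial_limit_at_right_real]) auto
  then have M: "M = 0" by simp
  define q where "q = (\<lambda>v. (norm (g v))^2 * exp (- (real N * v)))"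
  have "g v * exp (- (of_nat N * of_real v)) * cnj (g v) = of_real (q v)" for v
    by (simp add: q_def of_real_exp mult_ac flip: complex_norm_square)
  then have q: "q = Re \<circ> (\<lambda>u. g u * exp (- (of_nat N * of_real u)) * cnj (g u))"
    by (simp add: fun_eq_iff)
  note int = weighted_square_integrable[OF cont bd N]
  have "q integrable_on {0..}"
    unfolding q by (rule integrable_linear[OF int bounded_linear_Re])
  moreover have "integral {0..} q = 0"
    unfolding q integral_linear[OF int bounded_linear_Re] by (simp add: M_def[symmetric] M)
  moreover have "continuous_on UNIV q"
    unfolding q_def by (intro continuous_intros cont)
  ultimately have "q u = 0"
    using continuous_nonneg_integral_eq_0_imp_eq_0[of q u] u by (simp add: q_def)
  then show ?thesis by (simp add: q_def)
qed

section \<open>Delay equations\<close>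

lemma exp_sum_eventually_nonzero:
  fixes S :: "nat set" and b :: "nat \<Rightarrow> real" and c :: "nat \<Rightarrow> complex"
  assumes fin: "finite S" and inj: "inj_on b S" and nontrivial: "\<exists>k\<in>S. c k \<noteq> 0"
  shows "eventually (\<lambda>\<sigma>::real. (\<Sum>k\<in>S. c k * exp (- (of_real \<sigma> * of_real (b k)))) \<noteq> 0) at_top"
proof -
  define S' where "S' = {k\<in>S. c k \<noteq> 0}"
  have "finite S'" "S' \<noteq> {}" using fin nontrivial by (auto simp: S'_def)
  then obtain k1 where k1: "k1 \<in> S'" "\<And>k. k \<in> S' \<Longrightarrow> b k1 \<le> b k"
    using arg_min_if_finite[of S' b] by (metis arg_min_least)
  then have k1S: "k1 \<in> S" "c k1 \<noteq> 0" by (auto simp: S'_def)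
  define f where "f \<sigma> = (\<Sum>k\<in>S. c k * exp (- (of_real \<sigma> * of_real (b k - b k1))))" for \<sigma> :: real
  have scale: "(\<Sum>k\<in>S. c k * exp (- (of_real \<sigma> * of_real (b k)))) = exp (- (of_real \<sigma> * of_real (b k1))) * f \<sigma>"
    for \<sigma>
    by (simp add: f_def sum_distrib_left algebra_simps flip: exp_add)
  have f_split: "f \<sigma> = c k1 + (\<Sum>k\<in>S - {k1}. c k * exp (- (of_real \<sigma> * of_real (b k - b k1))))" for \<sigma>
    unfolding f_def using fin k1S by (subst sum.remove[of _ k1]) auto
  have "((\<lambda>\<sigma>::real. c k * exp (- (of_real \<sigma> * of_real (b k - b k1)))) \<longlongrightarrow> 0) at_top"
    if k: "k \<in> S - {k1}" for k
  proof (cases "c k = 0")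
    case False
    then have "b k1 < b k"
      using k k1 inj k1S by (force simp: S'_def dest: inj_onD)
    then have "((\<lambda>\<sigma>::real. exp (- (\<sigma> * (b k - b k1)))) \<longlongrightarrow> 0) at_top"
      by real_asymp
    then have "((\<lambda>\<sigma>::real. exp (- (of_real \<sigma> * of_real (b k - b k1)))) \<longlongrightarrow> (0::complex)) at_top"
      using tendsto_of_real[where 'a = complex] by (fastforce simp: of_real_exp)
    then show ?thesis by (rule tendsto_mult_right_zero)
  qed simp
  then have "(f \<longlongrightarrow> c k1 + 0) at_top"
    unfolding f_split[abs_def] by (intro tendsto_add tendsto_const tendsto_null_sum)
  then have "eventually (\<lambda>\<sigma>. f \<sigma> \<noteq> 0) at_top"
    using k1S(2) by (intro tendsto_imp_eventually_ne) auto
  then show ?thesis by (auto simp: scale elim: eventually_mono)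
qed

lemma laplace_delay_relation:
  fixes h :: "real \<Rightarrow> complex" and d :: "nat \<Rightarrow> real" and c :: "nat \<Rightarrow> complex"
  assumes cont: "continuous_on UNIV h" and bd: "\<And>u. norm (h u) \<le> B"
    and fin: "finite S" and rel: "\<And>u. (\<Sum>k\<in>S. c k * h (u - d k)) = 0" and s: "Re s > 0"
  shows "(\<Sum>k\<in>S. c k * exp (- (s * of_real (d k))) * laplace_from h (- d k) s) = 0"
proof -
  have int: "(\<lambda>u. c k * (h (u - d k) * exp (- (s * of_real u)))) integrable_on {0..}" for k
    by (intro integrable_on_mult_right laplace_integrand_integrable[OF _ _ s, where B = B])
       (auto intro!: continuous_on_compose2[OF cont] continuous_intros simp: bd)
  have "0 = integral {0..} (\<lambda>u. (\<Sum>k\<in>S. c k * h (u - d k)) * exp (- (s * of_real u)))"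
    by (simp add: rel)
  also have "\<dots> = (\<Sum>k\<in>S. c k * integral {0..} (\<lambda>u. h (u - d k) * exp (- (s * of_real u))))"
    unfolding sum_distrib_right mult.assoc integral_sum[OF fin int] integral_mult_right ..
  also have "\<dots> = (\<Sum>k\<in>S. c k * exp (- (s * of_real (d k))) * laplace_from h (- d k) s)"
    by (simp add: laplace_from_shift[OF cont bd s] mult.assoc)
  finally show ?thesis by simp
qed

locale delay_equation =
  fixes g :: "real \<Rightarrow> complex" and B :: real
    and S :: "nat set" and b :: "nat \<Rightarrow> real" and c :: "nat \<Rightarrow> complex"
  assumes cont: "continuous_on UNIV g" and bd: "\<And>u. norm (g u) \<le> B"
    and lim: "(g \<longlongrightarrow> 0) at_top"
    and fin: "finite S" and bpos: "\<And>k. k \<in> S \<Longrightarrow> b k > 0" and inj: "inj_on b S"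
    and nontrivial: "\<exists>k\<in>S. c k \<noteq> 0"
    and rel: "\<And>u. (\<Sum>k\<in>S. c k * g (u - b k)) = 0"
begin

definition charfun :: "complex \<Rightarrow> complex" where
  "charfun s = (\<Sum>k\<in>S. c k * exp (- (s * of_real (b k))))"

definition initial_term :: "complex \<Rightarrow> complex" where
  "initial_term s = (\<Sum>k\<in>S. c k * exp (- (s * of_real (b k)))
                             * integral {- b k..0} (\<lambda>v. g v * exp (- (s * of_real v))))"

lemma holomorphic_charfun: "charfun holomorphic_on UNIV"
  unfolding charfun_def by (intro holomorphic_intros)

lemma holomorphic_initial_term: "initial_term holomorphic_on UNIV"
  unfolding initial_term_def by (intro holomorphic_intros holomorphic_on_laplace_integral_Icc[OF cont])

lemma charfun_eventually_nonzero: "eventually (\<lambda>\<sigma>. charfun (of_real \<sigma>) \<noteq> 0) at_top"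
  using exp_sum_eventually_nonzero[OF fin inj nontrivial] unfolding charfun_def .

lemma laplace_right_half_plane:
  assumes s: "Re s > 0"
  shows "charfun s * laplace_from g 0 s + initial_term s = 0"
proof -
  let ?I = "\<lambda>k. integral {- b k..0} (\<lambda>v. g v * exp (- (s * of_real v)))"
  have "0 = (\<Sum>k\<in>S. c k * exp (- (s * of_real (b k))) * laplace_from g (- b k) s)"
    using laplace_delay_relation[OF cont bd fin rel s] by simp
  also have "\<dots> = (\<Sum>k\<in>S. c k * exp (- (s * of_real (b k))) * (?I k + laplace_from g 0 s))"
  proof (intro sum.cong refl)
    fix k assume "k \<in> S"
    then show "c k * exp (- (s * of_real (b k))) * laplace_from g (- b k) s
             = c k * exp (- (s * of_real (b k))) * (?I k + laplace_from g 0 s)"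
      using laplace_from_split[OF cont bd s, of "- b k" 0] bpos[of k] by simp
  qed
  also have "\<dots> = charfun s * laplace_from g 0 s + initial_term s"
    by (simp add: charfun_def initial_term_def sum_distrib_left sum.distrib distrib_left mult_ac)
  finally show ?thesis by simp
qed

lemma laplace_left_half_plane:
  assumes s: "Re s < 0"
  shows "charfun s * laplace_from (\<lambda>u. g (- u)) 0 (- s) = initial_term s"
proof -
  define gm where "gm = (\<lambda>u. g (- u))"
  have contm: "continuous_on UNIV gm"
    unfolding gm_def by (intro continuous_on_compose2[OF cont] continuous_intros) auto
  have bdm: "norm (gm u) \<le> B" for u
    unfolding gm_def by (rule bd)
  have s': "Re (- s) > 0" using s by simp
  have relm: "(\<Sum>k\<in>S. c k * gm (u - (- b k))) = 0" for u
    using rel[of "- u"] by (simp add: gm_def)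
  let ?I = "\<lambda>k. integral {- b k..0} (\<lambda>v. g v * exp (- (s * of_real v)))"
  have "0 = (\<Sum>k\<in>S. c k * exp (- (s * of_real (b k))) * laplace_from gm (b k) (- s))"
    using laplace_delay_relation[OF contm bdm fin relm s'] by simp
  also have "\<dots> = (\<Sum>k\<in>S. c k * exp (- (s * of_real (b k))) * (laplace_from gm 0 (- s) - ?I k))"
  proof (intro sum.cong refl)
    fix k assume "k \<in> S"
    have "integral {0..b k} (\<lambda>u. gm u * exp (- (- s * of_real u))) = ?I k"
      using Henstock_Kurzweil_Integration.integral_reflect_real[of 0 "- b k" "\<lambda>v. g v * exp (- (s * of_real v))"]
      by (simp add: gm_def)
    then show "c k * exp (- (s * of_real (b k))) * laplace_from gm (b k) (- s)
             = c k * exp (- (s * of_real (b k))) * (laplace_from gm 0 (- s) - ?I k)"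
      using laplace_from_split[OF contm bdm s', of 0 "b k"] bpos[OF \<open>k \<in> S\<close>] by simp
  qed
  also have "\<dots> = charfun s * laplace_from gm 0 (- s) - initial_term s"
    by (simp add: charfun_def initial_term_def sum_distrib_left sum_subtractf right_diff_distrib mult_ac)
  finally show ?thesis by (simp add: gm_def)
qed


lemma charfun_nonzero_somewhere:
  obtains \<beta> where "charfun \<beta> \<noteq> 0"
proof -
  have "\<exists>\<sigma>. charfun (of_real \<sigma>) \<noteq> 0"
    using eventually_happens[OF charfun_eventually_nonzero] by simp
  then show ?thesis using that by blast
qed

lemma charfun_nonzero_near: "eventually (\<lambda>w. charfun w \<noteq> 0) (at z)"
proof -
  obtain \<beta> where "charfun \<beta> \<noteq> 0"
    by (rule charfun_nonzero_somewhere)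
  from non_zero_neighbour_alt[OF holomorphic_charfun open_UNIV connected_UNIV _ _ this, of z]
  show ?thesis by (auto elim: eventually_mono)
qed

lemma norm_quotient_le:
  assumes Re: "Re s \<noteq> 0" and P: "charfun s \<noteq> 0"
  shows "norm (initial_term s / charfun s) \<le> B / \<bar>Re s\<bar>"
proof (cases "Re s > 0")
  case True
  then have "initial_term s / charfun s = - laplace_from g 0 s"
    using laplace_right_half_plane[OF True] P by (simp add: field_simps add_eq_0_iff)
  then show ?thesis
    using norm_laplace_from_le[OF cont bd True, of 0] True by simp
next
  case False
  then have s: "Re (- s) > 0" using Re by simp
  have "initial_term s / charfun s = laplace_from (\<lambda>u. g (- u)) 0 (- s)"
    using laplace_left_half_plane[of s] s P by (simp add: field_simps)
  moreover have "continuous_on UNIV (\<lambda>u. g (- u))"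
    by (intro continuous_on_compose2[OF cont] continuous_intros) auto
  then have "norm (laplace_from (\<lambda>u. g (- u)) 0 (- s)) \<le> B * exp (- (Re (- s) * 0)) / Re (- s)"
    by (rule norm_laplace_from_le[OF _ _ s]) (rule bd)
  ultimately show ?thesis
    using s by simp
qed

lemma quotient_boundary_limit:
  assumes z: "Re z = 0"
  shows "((\<lambda>\<sigma>. of_real \<sigma> * (initial_term (z + of_real \<sigma>) / charfun (z + of_real \<sigma>))) \<longlongrightarrow> 0)
           (at_right 0)"
proof -
  have "((\<lambda>\<sigma>. - (of_real \<sigma> * laplace_from g 0 (z + of_real \<sigma>))) \<longlongrightarrow> - 0) (at_right 0)"
    by (intro tendsto_minus laplace_from_boundary_limit[OF cont bd lim z])
  then have lim0: "((\<lambda>\<sigma>. - (of_real \<sigma> * laplace_from g 0 (z + of_real \<sigma>))) \<longlongrightarrow> 0) (at_right 0)"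
    by simp
  have "eventually (\<lambda>\<sigma>. charfun (z + of_real \<sigma>) \<noteq> 0) (at_right 0)"
    by (rule eventually_compose_filterlim[OF charfun_nonzero_near filterlim_plus_of_real_at_right])
  then have "eventually (\<lambda>\<sigma>. - (of_real \<sigma> * laplace_from g 0 (z + of_real \<sigma>))
          = of_real \<sigma> * (initial_term (z + of_real \<sigma>) / charfun (z + of_real \<sigma>))) (at_right 0)"
    using eventually_at_right_less[of "0::real"]
  proof eventually_elim
    case (elim \<sigma>)
    then have "Re (z + of_real \<sigma>) > 0" using z by simp
    with elim(1) show ?case
      using laplace_right_half_plane by (simp add: field_simps add_eq_0_iff)
  qed
  with lim0 show ?thesis
    by (rule Lim_transform_eventually)
qed

lemma initial_term_eq_0:
  assumes "charfun s \<noteq> 0"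
  shows "initial_term s = 0"
proof -
  obtain \<beta> where "charfun \<beta> \<noteq> 0"
    by (rule charfun_nonzero_somewhere)
  from quotient_eq_0_if_bounded_by_inverse_abs_Re[OF holomorphic_charfun holomorphic_initial_term
      this norm_quotient_le quotient_boundary_limit assms]
  show ?thesis .
qed

lemma laplace_moments_eq_0:
  obtains N where "N \<ge> 1" "\<And>j. laplace_from g 0 (of_nat (N + j)) = 0"
proof -
  obtain K where K: "\<And>\<sigma>. \<sigma> \<ge> K \<Longrightarrow> charfun (of_real \<sigma>) \<noteq> 0"
    using charfun_eventually_nonzero unfolding eventually_at_top_linorder by blast
  define N where "N = nat \<lceil>K\<rceil> + 1"
  have "laplace_from g 0 (of_nat (N + j)) = 0" for j
  proof -
    have "real (N + j) \<ge> K"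
      unfolding N_def by linarith
    then have P: "charfun (of_nat (N + j)) \<noteq> 0"
      using K by (metis of_real_of_nat_eq)
    have "Re (of_nat (N + j) :: complex) > 0"
      by (simp add: N_def)
    from laplace_right_half_plane[OF this]
    show ?thesis
      using initial_term_eq_0[OF P] P by (simp del: of_nat_add)
  qed
  then show ?thesis using that[of N] by (simp add: N_def)
qed

lemma vanishes_on_nonneg:
  assumes "u \<ge> 0"
  shows "g u = 0"
proof -
  obtain N where "N \<ge> 1" "\<And>j. laplace_from g 0 (of_nat (N + j)) = 0"
    using laplace_moments_eq_0 by blast
  then show ?thesis
    by (rule laplace_moments_eq_0_imp_eq_0[OF cont bd lim _ _ assms])
qed

end

lemma delay_equation_eq_0:
  fixes g :: "real \<Rightarrow> complex" and b :: "nat \<Rightarrow> real" and c :: "nat \<Rightarrow> complex"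
  assumes cont: "continuous_on UNIV g" and bd: "\<And>u. norm (g u) \<le> B"
    and lim: "(g \<longlongrightarrow> 0) at_top"
    and fin: "finite S" and inj: "inj_on b S" and nontrivial: "\<exists>k\<in>S. c k \<noteq> 0"
    and rel: "\<And>u. (\<Sum>k\<in>S. c k * g (u - b k)) = 0"
  shows "g u = 0"
proof -
  \<comment> \<open>Adding \<open>T\<close> to every delay makes them positive; translating \<open>g\<close> by \<open>u\<close> moves \<open>u\<close> to \<open>0\<close>.\<close>
  define T where "T = (\<Sum>k\<in>S. \<bar>b k\<bar>) + 1"
  have "\<bar>b k\<bar> \<le> (\<Sum>k\<in>S. \<bar>b k\<bar>)" if "k \<in> S" for k
    using fin that by (intro member_le_sum) auto
  then have bpos: "b k + T > 0" if "k \<in> S" for k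
    using that abs_ge_minus_self[of "b k"] unfolding T_def by (smt (verit))
  have "filterlim (\<lambda>x. x + u) at_top at_top"
    by real_asymp
  then have "((\<lambda>x. g (x + u)) \<longlongrightarrow> 0) at_top"
    by (rule filterlim_compose[OF lim])
  moreover have "continuous_on UNIV (\<lambda>x. g (x + u))"
    by (intro continuous_on_compose2[OF cont] continuous_intros) auto
  moreover have "inj_on (\<lambda>k. b k + T) S"
    using inj by (auto simp: inj_on_def)
  moreover have "(\<Sum>k\<in>S. c k * g (v - (b k + T) + u)) = 0" for v
    using rel[of "v - T + u"] by (simp add: algebra_simps)
  ultimately interpret delay_equation "\<lambda>x. g (x + u)" B S "\<lambda>k. b k + T" c
    using bd fin bpos nontrivial by unfold_locales simp_all
  show ?thesis
    using vanishes_on_nonneg[of 0] by simp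
qed

lemma continuous_tendsto_0_bounded_on_atLeast:
  fixes f :: "real \<Rightarrow> 'a::real_normed_vector"
  assumes cont: "continuous_on {a..} f" and lim: "(f \<longlongrightarrow> 0) at_top"
  obtains B where "\<And>x. x \<ge> a \<Longrightarrow> norm (f x) \<le> B"
proof -
  obtain X where X: "\<And>x. x \<ge> X \<Longrightarrow> norm (f x) < 1"
    using tendstoD[OF lim, of 1] unfolding eventually_at_top_linorder by auto
  have "compact (f ` {a..X})"
    by (intro compact_continuous_image continuous_on_subset[OF cont]) auto
  then obtain C where C: "\<And>y. y \<in> f ` {a..X} \<Longrightarrow> norm y \<le> C"
    using compact_imp_bounded bounded_iff by metis
  have "norm (f x) \<le> max C 1" if "x \<ge> a" for x
  proof (cases "x \<le> X")
    case True then show ?thesis using C[of "f x"] that by force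
  next
    case False then show ?thesis using X[of x] by force
  qed
  then show ?thesis using that by blast
qed

theorem lemma2p1:
  fixes f :: "real \<Rightarrow> complex" and n :: nat
    and lam :: "nat \<Rightarrow> real" and c :: "nat \<Rightarrow> complex"
  assumes cont: "continuous_on {0..} f"
    and nonzero: "\<exists>x\<ge>0. f x \<noteq> 0"
    and lim: "(f \<longlongrightarrow> 0) at_top"
    and n: "n \<ge> 1"
    and pos: "\<And>k. k \<in> {1..n} \<Longrightarrow> lam k > 0"
    and distinct: "inj_on lam {1..n}"
    and rel: "\<And>x. x \<ge> 0 \<Longrightarrow> (\<Sum>k=1..n. c k * f (x / lam k)) = 0"
  shows "\<forall>k\<in>{1..n}. c k = 0"
proof (rule ccontr)
  assume "\<not> (\<forall>k\<in>{1..n}. c k = 0)"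
  then have nontrivial: "\<exists>k\<in>{1..n}. c k \<noteq> 0" by blast
  obtain B where B: "\<And>x. x \<ge> 0 \<Longrightarrow> norm (f x) \<le> B"
    using continuous_tendsto_0_bounded_on_atLeast[OF cont lim] by blast
  have "f (exp u) = 0" for u
  proof (rule delay_equation_eq_0[where g = "\<lambda>u. f (exp u)" and S = "{1..n}" and b = "\<lambda>k. ln (lam k)"])
    show "continuous_on UNIV (\<lambda>u. f (exp u))"
      by (rule continuous_on_compose2[OF cont]) (auto intro!: continuous_intros)
    show "((\<lambda>u. f (exp u)) \<longlongrightarrow> 0) at_top"
      by (rule filterlim_compose[OF lim exp_at_top])
    show "inj_on (\<lambda>k. ln (lam k)) {1..n}"
    proof (rule inj_onI)
      fix k k' assume k: "k \<in> {1..n}" "k' \<in> {1..n}" and "ln (lam k) = ln (lam k')"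
      then have "lam k = lam k'" using pos by simp
      then show "k = k'" using distinct k by (auto dest: inj_onD)
    qed
    fix v
    have "(\<Sum>k\<in>{1..n}. c k * f (exp (v - ln (lam k)))) = (\<Sum>k=1..n. c k * f (exp v / lam k))"
      by (intro sum.cong refl) (simp add: exp_diff pos)
    also have "\<dots> = 0"
      by (rule rel) simp
    finally show "(\<Sum>k\<in>{1..n}. c k * f (exp (v - ln (lam k)))) = 0" .
    show "norm (f (exp u)) \<le> B" for u
      by (rule B) simp
  qed (use nontrivial in simp_all)
  then have "f x = 0" if "x \<in> {0<..}" for x
    using that exp_ln[of x] by (metis greaterThan_iff)
  moreover have "continuous_on (closure {0<..}) f"
    using cont by simp
  ultimately have "f x = 0" if "x \<ge> 0" for x
    using continuous_constant_on_closure[of "{0<..}" f] that by simp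
  then show False
    using nonzero by blast
qed

end
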